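(* Let $G$ be a locally compact group, $X$ a proper $G$-space and $Y$ any $G$-space. Let $C\subset X$ be a closed small subset of $X$ meeting each $G$-orbit of $X$ in exactly one point. Then every continuous map $f:C\to Y$ such that $G_c\subset G_{f(c)}$ for all $c\in C$ has a unique extension to a continuous equivariant map $F:X\to Y$.
   Context: All spaces are completely regular Hausdorff. A $G$-space is a space $X$ with a continuous action $G\times X\to X$, $(g,x)\mapsto gx$, with $ex=x$ and $(gh)x=g(hx)$. $G_x=\{g\in G\mid gx=x\}$ is the stabilizer of $x$. A map $F$ is equivariant if $F(gx)=gF(x)$. For $U,V\subset X$ the transporter is $\langle U,V\rangle=\{g\in G\mid gU\cap V\neq\emptyset\}$; $U$ and $V$ are thin relative to each other if $\langle U,V\rangle$ has compact closure in $G$. A subset $U\subset X$ is small if every point of $X$ has a neighborhood thin relative to $U$. For $G$ locally compact, a $G$-space $X$ is proper if every point of $X$ has a small neighborhood. *)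

theory Defs
  imports "HOL-Analysis.Analysis"
begin

text \<open>Standing convention: all spaces are completely regular Hausdorff.\<close>
definition crH :: "'a topology \<Rightarrow> bool" where
  "crH T \<longleftrightarrow> completely_regular_space T \<and> Hausdorff_space T"

definition topological_group ::
  "'g topology \<Rightarrow> ('g \<Rightarrow> 'g \<Rightarrow> 'g) \<Rightarrow> 'g \<Rightarrow> ('g \<Rightarrow> 'g) \<Rightarrow> bool" where
  "topological_group TG m e i \<longleftrightarrow>
     crH TG \<and>
     e \<in> topspace TG \<and>
     (\<forall>g\<in>topspace TG. \<forall>h\<in>topspace TG. m g h \<in> topspace TG) \<and>
     (\<forall>g\<in>topspace TG. i g \<in> topspace TG) \<and>
     (\<forall>g\<in>topspace TG. \<forall>h\<in>topspace TG. \<forall>k\<in>topspace TG. m (m g h) k = m g (m h k)) \<and>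
     (\<forall>g\<in>topspace TG. m e g = g \<and> m g e = g) \<and>
     (\<forall>g\<in>topspace TG. m (i g) g = e \<and> m g (i g) = e) \<and>
     continuous_map (prod_topology TG TG) TG (\<lambda>(g, h). m g h) \<and>
     continuous_map TG TG i"

definition G_space ::
  "'g topology \<Rightarrow> ('g \<Rightarrow> 'g \<Rightarrow> 'g) \<Rightarrow> 'g \<Rightarrow> 'x topology \<Rightarrow> ('g \<Rightarrow> 'x \<Rightarrow> 'x) \<Rightarrow> bool" where
  "G_space TG m e X act \<longleftrightarrow>
     crH X \<and>
     continuous_map (prod_topology TG X) X (\<lambda>(g, x). act g x) \<and>
     (\<forall>x\<in>topspace X. act e x = x) \<and>
     (\<forall>g\<in>topspace TG. \<forall>h\<in>topspace TG. \<forall>x\<in>topspace X. act (m g h) x = act g (act h x))"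

definition stabilizer :: "'g topology \<Rightarrow> ('g \<Rightarrow> 'x \<Rightarrow> 'x) \<Rightarrow> 'x \<Rightarrow> 'g set" where
  "stabilizer TG act x = {g \<in> topspace TG. act g x = x}"

definition orbit :: "'g topology \<Rightarrow> ('g \<Rightarrow> 'x \<Rightarrow> 'x) \<Rightarrow> 'x \<Rightarrow> 'x set" where
  "orbit TG act x = {act g x | g. g \<in> topspace TG}"

definition transporter :: "'g topology \<Rightarrow> ('g \<Rightarrow> 'x \<Rightarrow> 'x) \<Rightarrow> 'x set \<Rightarrow> 'x set \<Rightarrow> 'g set" where
  "transporter TG act U V = {g \<in> topspace TG. \<exists>u\<in>U. act g u \<in> V}"

definition thin :: "'g topology \<Rightarrow> ('g \<Rightarrow> 'x \<Rightarrow> 'x) \<Rightarrow> 'x set \<Rightarrow> 'x set \<Rightarrow> bool" where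
  "thin TG act U V \<longleftrightarrow> compactin TG (TG closure_of (transporter TG act U V))"

definition small :: "'g topology \<Rightarrow> 'x topology \<Rightarrow> ('g \<Rightarrow> 'x \<Rightarrow> 'x) \<Rightarrow> 'x set \<Rightarrow> bool" where
  "small TG X act U \<longleftrightarrow>
     (\<forall>x\<in>topspace X. \<exists>N. N \<subseteq> topspace X \<and> x \<in> X interior_of N \<and> thin TG act N U)"

text \<open>Proper G-space (G locally compact assumed separately).\<close>
definition proper_G_space :: "'g topology \<Rightarrow> 'x topology \<Rightarrow> ('g \<Rightarrow> 'x \<Rightarrow> 'x) \<Rightarrow> bool" where
  "proper_G_space TG X act \<longleftrightarrow>
     (\<forall>x\<in>topspace X. \<exists>N. N \<subseteq> topspace X \<and> x \<in> X interior_of N \<and> small TG X act N)"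

definition equivariant ::
  "'g topology \<Rightarrow> 'x topology \<Rightarrow> ('g \<Rightarrow> 'x \<Rightarrow> 'x) \<Rightarrow> ('g \<Rightarrow> 'y \<Rightarrow> 'y) \<Rightarrow> ('x \<Rightarrow> 'y) \<Rightarrow> bool" where
  "equivariant TG X actX actY F \<longleftrightarrow>
     (\<forall>g\<in>topspace TG. \<forall>x\<in>topspace X. F (actX g x) = actY g (F x))"

end

theory Submission
  imports Defs
begin

text \<open>
  Send a point \<open>x\<close> into the transversal \<open>C\<close> by some \<open>g\<close> and put \<open>F x = g\<^sup>-\<^sup>1 f (g x)\<close>.
  Two such \<open>g\<close> differ by an element of the stabilizer of \<open>g x \<in> C\<close>, which also fixes
  \<open>f (g x)\<close>, so \<open>F\<close> is well defined, equivariant, and clearly the only possible equivariant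
  extension. For continuity at \<open>x\<^sub>0\<close>, \<open>F\<close> agrees with the continuous map
  \<open>(g, x) \<mapsto> g\<^sup>-\<^sup>1 f (g x)\<close> on the closed set \<open>{(g, x). g x \<in> C}\<close>; smallness of \<open>C\<close>
  confines the relevant \<open>g\<close>, for \<open>x\<close> near \<open>x\<^sub>0\<close>, to a compact set \<open>K\<close>, and the tube
  lemma around \<open>K \<times> {x\<^sub>0}\<close> produces the required neighbourhood of \<open>x\<^sub>0\<close>.
\<close>

locale topgroup =
  fixes TG :: "'g topology" and m :: "'g \<Rightarrow> 'g \<Rightarrow> 'g" and e :: 'g and i :: "'g \<Rightarrow> 'g"
  assumes topological_group: "topological_group TG m e i"
begin

lemma
  shows unit_closed: "e \<in> topspace TG"
    and mult_closed: "\<And>g h. g \<in> topspace TG \<Longrightarrow> h \<in> topspace TG \<Longrightarrow> m g h \<in> topspace TG"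
    and inv_closed: "\<And>g. g \<in> topspace TG \<Longrightarrow> i g \<in> topspace TG"
    and assoc: "\<And>g h k. \<lbrakk>g \<in> topspace TG; h \<in> topspace TG; k \<in> topspace TG\<rbrakk>
                  \<Longrightarrow> m (m g h) k = m g (m h k)"
    and left_unit: "\<And>g. g \<in> topspace TG \<Longrightarrow> m e g = g"
    and right_unit: "\<And>g. g \<in> topspace TG \<Longrightarrow> m g e = g"
    and left_inverse: "\<And>g. g \<in> topspace TG \<Longrightarrow> m (i g) g = e"
    and right_inverse: "\<And>g. g \<in> topspace TG \<Longrightarrow> m g (i g) = e"
    and continuous_inv: "continuous_map TG TG i"
  using topological_group unfolding topological_group_def by auto

lemma inv_unique:
  assumes "g \<in> topspace TG" "h \<in> topspace TG" "m g h = e"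
  shows "i g = h"
proof -
  have "i g = m (i g) (m g h)"
    using assms by (simp add: inv_closed right_unit)
  also have "\<dots> = m (m (i g) g) h"
    using assms by (simp add: assoc inv_closed)
  also have "\<dots> = h"
    using assms by (simp add: left_inverse left_unit)
  finally show ?thesis .
qed

lemma inv_unit: "i e = e"
  by (rule inv_unique) (simp_all add: unit_closed left_unit)

lemma inv_inv: "g \<in> topspace TG \<Longrightarrow> i (i g) = g"
  by (rule inv_unique) (simp_all add: inv_closed left_inverse)

lemma inv_mult:
  assumes "g \<in> topspace TG" "h \<in> topspace TG"
  shows "i (m g h) = m (i h) (i g)"
proof (rule inv_unique)
  have "m (m g h) (m (i h) (i g)) = m g (m (m h (i h)) (i g))"
    using assms by (simp add: assoc mult_closed inv_closed)
  then show "m (m g h) (m (i h) (i g)) = e"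
    using assms by (simp add: right_inverse left_unit inv_closed)
qed (use assms in \<open>simp_all add: mult_closed inv_closed\<close>)

context
  fixes X :: "'x topology" and act :: "'g \<Rightarrow> 'x \<Rightarrow> 'x"
  assumes G_space: "G_space TG m e X act"
begin

lemma
  shows continuous_action: "continuous_map (prod_topology TG X) X (\<lambda>(g, x). act g x)"
    and act_unit: "\<And>x. x \<in> topspace X \<Longrightarrow> act e x = x"
    and act_mult: "\<And>g h x. \<lbrakk>g \<in> topspace TG; h \<in> topspace TG; x \<in> topspace X\<rbrakk>
                     \<Longrightarrow> act (m g h) x = act g (act h x)"
  using G_space unfolding G_space_def by auto

lemma act_closed: "g \<in> topspace TG \<Longrightarrow> x \<in> topspace X \<Longrightarrow> act g x \<in> topspace X"
  using continuous_map_funspace[OF continuous_action] by (force simp: Pi_iff)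

lemma act_inv_act: "g \<in> topspace TG \<Longrightarrow> x \<in> topspace X \<Longrightarrow> act (i g) (act g x) = x"
  by (simp flip: act_mult add: inv_closed left_inverse act_unit)

end

end

lemma openin_guarded_preimage:
  assumes "closedin P D" and "continuous_map (subtopology P D) Y \<phi>" and "openin Y W"
  shows "openin P {z \<in> topspace P. z \<in> D \<longrightarrow> \<phi> z \<in> W}"
proof -
  obtain U where U: "openin P U" and eq: "{z \<in> topspace (subtopology P D). \<phi> z \<in> W} = U \<inter> D"
    using openin_continuous_map_preimage[OF assms(2,3)] unfolding openin_subtopology by blast
  have "{z \<in> topspace P. z \<in> D \<longrightarrow> \<phi> z \<in> W} = U \<union> (topspace P - D)"
    using eq openin_subset[OF U] by auto
  then show ?thesis
    using U assms(1) by (simp add: closedin_def openin_Un)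
qed

lemma continuous_map_transported_to_small_closed:
  fixes TG :: "'g topology" and X :: "'x topology" and act :: "'g \<Rightarrow> 'x \<Rightarrow> 'x"
    and C :: "'x set"
  defines "D \<equiv> {(g, x) \<in> topspace TG \<times> topspace X. act g x \<in> C}"
  assumes act: "continuous_map (prod_topology TG X) X (\<lambda>(g, x). act g x)"
    and C: "closedin X C" "small TG X act C"
    and \<phi>: "continuous_map (subtopology (prod_topology TG X) D) Y \<phi>"
    and F_eq: "\<And>g x. \<lbrakk>g \<in> topspace TG; x \<in> topspace X; act g x \<in> C\<rbrakk> \<Longrightarrow> F x = \<phi> (g, x)"
    and reaches_C: "\<And>x. x \<in> topspace X \<Longrightarrow> \<exists>g\<in>topspace TG. act g x \<in> C"
    and F_maps: "F \<in> topspace X \<rightarrow> topspace Y"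
  shows "continuous_map X Y F"
  unfolding continuous_map_def
proof (intro conjI allI impI F_maps)
  have "D = {z \<in> topspace (prod_topology TG X). (\<lambda>(g, x). act g x) z \<in> C}"
    by (auto simp: D_def)
  then have D_closed: "closedin (prod_topology TG X) D"
    using closedin_continuous_map_preimage[OF act C(1)] by simp
  fix W assume W: "openin Y W"
  define U where "U = {z \<in> topspace (prod_topology TG X). z \<in> D \<longrightarrow> \<phi> z \<in> W}"
  have U_open: "openin (prod_topology TG X) U"
    unfolding U_def by (rule openin_guarded_preimage[OF D_closed \<phi> W])
  show "openin X {x \<in> topspace X. F x \<in> W}"
  proof (rule openin_subopen[THEN iffD2], intro ballI)
    fix x0 assume "x0 \<in> {x \<in> topspace X. F x \<in> W}"
    then have x0: "x0 \<in> topspace X" "F x0 \<in> W" by auto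
    obtain N where N: "x0 \<in> X interior_of N" "thin TG act N C"
      using C(2) x0(1) unfolding small_def by blast
    define K where "K = TG closure_of transporter TG act N C"
    have K: "compactin TG K"
      using N(2) unfolding thin_def K_def .
    have "K \<times> {x0} \<subseteq> U"
    proof clarify
      fix k assume "k \<in> K"
      then have "k \<in> topspace TG"
        using compactin_subset_topspace[OF K] by blast
      then show "(k, x0) \<in> U"
        using x0 F_eq by (auto simp: U_def D_def)
    qed
    then obtain K' V where "K \<subseteq> K'" "openin X V" "x0 \<in> V" "K' \<times> V \<subseteq> U"
      using tube_lemma_left[OF U_open K x0(1)] by blast
    then have V: "openin X V" "x0 \<in> V" "K \<times> V \<subseteq> U"
      by auto
    have "X interior_of N \<inter> V \<subseteq> {x \<in> topspace X. F x \<in> W}"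
    proof
      fix x assume x: "x \<in> X interior_of N \<inter> V"
      then have xX: "x \<in> topspace X" and "x \<in> N"
        using openin_subset[OF V(1)] interior_of_subset[of X N] by auto
      obtain g where g: "g \<in> topspace TG" "act g x \<in> C"
        using reaches_C[OF xX] by blast
      have "g \<in> transporter TG act N C"
        using g \<open>x \<in> N\<close> unfolding transporter_def by blast
      moreover have "transporter TG act N C \<subseteq> topspace TG"
        unfolding transporter_def by blast
      ultimately have "g \<in> K"
        unfolding K_def using closure_of_subset by blast
      then have "(g, x) \<in> U"
        using V(3) x by blast
      then show "x \<in> {x \<in> topspace X. F x \<in> W}"
        using g xX F_eq by (auto simp: U_def D_def)
    qed
    then show "\<exists>T. openin X T \<and> x0 \<in> T \<and> T \<subseteq> {x \<in> topspace X. F x \<in> W}"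
      using N(1) V by (meson IntI openin_Int openin_interior_of)
  qed
qed

locale orbit_transversal = topgroup TG m e i
  for TG :: "'g topology" and m e i +
  fixes X :: "'x topology" and actX :: "'g \<Rightarrow> 'x \<Rightarrow> 'x"
    and Y :: "'y topology" and actY :: "'g \<Rightarrow> 'y \<Rightarrow> 'y"
    and C :: "'x set" and f :: "'x \<Rightarrow> 'y"
  assumes G_space_X: "G_space TG m e X actX"
    and G_space_Y: "G_space TG m e Y actY"
    and C_subset: "C \<subseteq> topspace X"
    and transversal: "\<forall>x\<in>topspace X. \<exists>!c. c \<in> C \<and> c \<in> orbit TG actX x"
    and f_maps: "f ` C \<subseteq> topspace Y"
    and stabilizer_subset: "\<forall>c\<in>C. stabilizer TG actX c \<subseteq> stabilizer TG actY (f c)"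
begin

lemma transversal_exists: "x \<in> topspace X \<Longrightarrow> \<exists>g\<in>topspace TG. actX g x \<in> C"
  using transversal unfolding orbit_def by blast

lemma transversal_unique:
  assumes "x \<in> topspace X" "g \<in> topspace TG" "h \<in> topspace TG" "actX g x \<in> C" "actX h x \<in> C"
  shows "actX g x = actX h x"
  using transversal assms unfolding orbit_def by blast

definition extension :: "'x \<Rightarrow> 'y" where
  "extension x = (let g = SOME g. g \<in> topspace TG \<and> actX g x \<in> C in actY (i g) (f (actX g x)))"

lemma extension_eq:
  assumes x: "x \<in> topspace X" and g: "g \<in> topspace TG" and gx: "actX g x \<in> C"
  shows "extension x = actY (i g) (f (actX g x))"
proof -
  obtain h where h: "h \<in> topspace TG" "actX h x \<in> C"
    and ext: "extension x = actY (i h) (f (actX h x))"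
    using someI_ex[OF transversal_exists[OF x, unfolded Bex_def]] by (auto simp: extension_def Let_def)
  define c where "c = actX h x"
  have c: "c \<in> C" "c \<in> topspace X"
    using h C_subset by (auto simp: c_def)
  have g_to_c: "actX g x = c"
    using transversal_unique[OF x g h(1) gx h(2)] by (simp add: c_def)
  have "actX (m g (i h)) c = actX g (actX (i h) (actX h x))"
    using act_mult[OF G_space_X g inv_closed[OF h(1)] c(2)] by (simp add: c_def)
  also have "\<dots> = c"
    using act_inv_act[OF G_space_X h(1) x] g_to_c by simp
  finally have "m g (i h) \<in> stabilizer TG actX c"
    unfolding stabilizer_def using mult_closed[OF g inv_closed[OF h(1)]] by simp
  then have fixes_fc: "actY (m g (i h)) (f c) = f c"
    using stabilizer_subset c(1) unfolding stabilizer_def by blast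
  have fc: "f c \<in> topspace Y" "actY (i h) (f c) \<in> topspace Y"
    using f_maps c(1) act_closed[OF G_space_Y inv_closed[OF h(1)]] by auto
  have "actY (i g) (f c) = actY (i g) (actY g (actY (i h) (f c)))"
    using fixes_fc act_mult[OF G_space_Y g inv_closed[OF h(1)] fc(1)] by simp
  also have "\<dots> = actY (i h) (f c)"
    using act_inv_act[OF G_space_Y g fc(2)] .
  finally show ?thesis
    using ext g_to_c by (simp add: c_def)
qed

lemma extension_restrict:
  assumes "c \<in> C"
  shows "extension c = f c"
proof -
  have "c \<in> topspace X" "f c \<in> topspace Y"
    using assms C_subset f_maps by auto
  then show ?thesis
    using extension_eq[OF _ unit_closed] assms
    by (simp add: act_unit[OF G_space_X] act_unit[OF G_space_Y] inv_unit)
qed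

lemma extension_in_topspace:
  assumes x: "x \<in> topspace X"
  shows "extension x \<in> topspace Y"
proof -
  obtain g where g: "g \<in> topspace TG" "actX g x \<in> C"
    using transversal_exists[OF x] by blast
  then have "f (actX g x) \<in> topspace Y"
    using f_maps by blast
  then show ?thesis
    using extension_eq[OF x g] act_closed[OF G_space_Y inv_closed[OF g(1)]] by simp
qed

lemma extension_equivariant: "equivariant TG X actX actY extension"
  unfolding equivariant_def
proof (intro ballI)
  fix g x assume g: "g \<in> topspace TG" and x: "x \<in> topspace X"
  obtain h where h: "h \<in> topspace TG" "actX h x \<in> C"
    using transversal_exists[OF x] by blast
  have hg: "m h (i g) \<in> topspace TG"
    using mult_closed[OF h(1) inv_closed[OF g]] .
  have "actX (m h (i g)) (actX g x) = actX h x"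
    using act_mult[OF G_space_X h(1) inv_closed[OF g] act_closed[OF G_space_X g x]]
      act_inv_act[OF G_space_X g x] by simp
  then have "extension (actX g x) = actY (i (m h (i g))) (f (actX h x))"
    using extension_eq[OF act_closed[OF G_space_X g x] hg] h(2) by simp
  also have "\<dots> = actY g (actY (i h) (f (actX h x)))"
    using act_mult[OF G_space_Y g inv_closed[OF h(1)]] f_maps h(2) inv_mult[OF h(1) inv_closed[OF g]]
      inv_inv[OF g] by (simp add: image_subset_iff)
  also have "\<dots> = actY g (extension x)"
    using extension_eq[OF x h] by simp
  finally show "extension (actX g x) = actY g (extension x)" .
qed

lemma extension_unique:
  assumes "equivariant TG X actX actY F" and "\<forall>c\<in>C. F c = f c" and x: "x \<in> topspace X"
  shows "F x = extension x"
proof -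
  obtain h where h: "h \<in> topspace TG" "actX h x \<in> C"
    using transversal_exists[OF x] by blast
  have "F x = F (actX (i h) (actX h x))"
    using act_inv_act[OF G_space_X h(1) x] by simp
  also have "\<dots> = actY (i h) (f (actX h x))"
    using assms(1,2) h inv_closed C_subset unfolding equivariant_def by auto
  also have "\<dots> = extension x"
    using extension_eq[OF x h] by simp
  finally show ?thesis .
qed

lemma extension_continuous:
  assumes "closedin X C" and "small TG X actX C" and f: "continuous_map (subtopology X C) Y f"
  shows "continuous_map X Y extension"
proof (rule continuous_map_transported_to_small_closed
    [where \<phi> = "\<lambda>(g, x). actY (i g) (f (actX g x))", OF continuous_action[OF G_space_X] assms(1,2)])
  let ?D = "{(g, x) \<in> topspace TG \<times> topspace X. actX g x \<in> C}"
  let ?S = "subtopology (prod_topology TG X) ?D"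
  have "continuous_map ?S (subtopology X C) (\<lambda>(g, x). actX g x)"
    using continuous_map_from_subtopology[OF continuous_action[OF G_space_X]]
    by (auto simp: continuous_map_in_subtopology)
  then have "continuous_map ?S Y (f \<circ> (\<lambda>(g, x). actX g x))"
    using f by (rule continuous_map_compose)
  moreover have "continuous_map ?S TG (i \<circ> fst)"
    using continuous_map_compose[OF continuous_map_from_subtopology[OF continuous_map_fst] continuous_inv] .
  ultimately have "continuous_map ?S (prod_topology TG Y) (\<lambda>z. ((i \<circ> fst) z, (f \<circ> (\<lambda>(g, x). actX g x)) z))"
    by (intro continuous_map_pairedI)
  from continuous_map_compose[OF this continuous_action[OF G_space_Y]]
  show "continuous_map ?S Y (\<lambda>(g, x). actY (i g) (f (actX g x)))"
    by (simp add: o_def case_prod_unfold)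
next
  show "extension x = (\<lambda>(g, x). actY (i g) (f (actX g x))) (g, x)"
    if "g \<in> topspace TG" "x \<in> topspace X" "actX g x \<in> C" for g x
    using extension_eq[OF that(2,1,3)] by simp
next
  show "\<exists>g\<in>topspace TG. actX g x \<in> C" if "x \<in> topspace X" for x
    using transversal_exists[OF that] .
next
  show "extension \<in> topspace X \<rightarrow> topspace Y"
    using extension_in_topspace by (rule Pi_I)
qed

end

theorem corollary4p3:
  fixes TG :: "'g topology" and m :: "'g \<Rightarrow> 'g \<Rightarrow> 'g" and e :: 'g and i :: "'g \<Rightarrow> 'g"
    and X :: "'x topology" and actX :: "'g \<Rightarrow> 'x \<Rightarrow> 'x"
    and Y :: "'y topology" and actY :: "'g \<Rightarrow> 'y \<Rightarrow> 'y"
    and C :: "'x set" and f :: "'x \<Rightarrow> 'y"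
  assumes "topological_group TG m e i"
    and "locally_compact_space TG"
    and "G_space TG m e X actX"
    and "proper_G_space TG X actX"
    and "G_space TG m e Y actY"
    and "closedin X C"
    and "small TG X actX C"
    and "\<forall>x\<in>topspace X. \<exists>!c. c \<in> C \<and> c \<in> orbit TG actX x"
    and "continuous_map (subtopology X C) Y f"
    and "\<forall>c\<in>C. stabilizer TG actX c \<subseteq> stabilizer TG actY (f c)"
  shows "\<exists>F. continuous_map X Y F \<and> equivariant TG X actX actY F \<and> (\<forall>c\<in>C. F c = f c)
           \<and> (\<forall>F'. continuous_map X Y F' \<and> equivariant TG X actX actY F' \<and> (\<forall>c\<in>C. F' c = f c)
                  \<longrightarrow> (\<forall>x\<in>topspace X. F' x = F x))"
proof -
  have "C \<subseteq> topspace X"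
    using assms(6) by (rule closedin_subset)
  moreover have "f ` C \<subseteq> topspace Y"
    using continuous_map_image_subset_topspace[OF assms(9)] calculation
    by (simp add: Int_absorb1)
  ultimately interpret orbit_transversal TG m e i X actX Y actY C f
    using assms(1,3,5,8,10)
    by (simp add: orbit_transversal_def orbit_transversal_axioms_def topgroup_def)
  show ?thesis
    using extension_continuous[OF assms(6,7,9)] extension_equivariant extension_restrict
      extension_unique by blast
qed

end
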